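(* Let $G$ be a finite group and $H\le G$ a subgroup. If $H$ is mixable and the action of $G$ on the coset space $G/H$ (by left multiplication) is mixable, then $G$ is mixable and \[\mathrm{mixlen}(G)\le \mathrm{mixlen}(H)+\mathrm{mixlen}(G,G/H).\]
   Context: For a finite group $G$, a random subproduct is a random element $g_1^{\epsilon_1}\cdots g_k^{\epsilon_k}$ with $g_1,\dots,g_k\in G$ fixed and $\epsilon_1,\dots,\epsilon_k$ independent Bernoulli random variables, $\epsilon_i\sim\mathrm{Ber}(p_i)$, $p_i\in[0,1]$; $k$ is its length. $G$ is mixable if some random subproduct is exactly uniform on $G$, and $\mathrm{mixlen}(G)$ is the minimal length of such. For a transitive action of $G$ on a finite set $X$, the action is mixable if for some (equivalently every) $x_0\in X$ there is a random subproduct $\mathbf{g}$ with $\mathbf{g}x_0$ uniform on $X$; $\mathrm{mixlen}(G,X)$ is the minimal length of such a random subproduct. *)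

theory Defs
  imports "HOL-Algebra.Group" "HOL-Algebra.Coset" Complex_Main
begin

text \<open>A random subproduct of length k is given by a list gs of k group elements and a list
 ps of k probabilities.\<close>

definition sel_weight :: "real list \<Rightarrow> nat set \<Rightarrow> real" where
  "sel_weight ps S = (\<Prod>i<length ps. if i \<in> S then ps ! i else 1 - ps ! i)"

definition subprod :: "('a, 'b) monoid_scheme \<Rightarrow> 'a list \<Rightarrow> nat set \<Rightarrow> 'a" where
  "subprod G gs S =
     foldr (\<lambda>i acc. (if i \<in> S then gs ! i else \<one>\<^bsub>G\<^esub>) \<otimes>\<^bsub>G\<^esub> acc) [0..<length gs] \<one>\<^bsub>G\<^esub>"

definition valid_rsp :: "('a, 'b) monoid_scheme \<Rightarrow> 'a list \<Rightarrow> real list \<Rightarrow> bool" where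
  "valid_rsp G gs ps \<longleftrightarrow> set gs \<subseteq> carrier G \<and> length ps = length gs
     \<and> (\<forall>p\<in>set ps. 0 \<le> p \<and> p \<le> 1)"

definition rsp_prob :: "('a, 'b) monoid_scheme \<Rightarrow> 'a list \<Rightarrow> real list \<Rightarrow> ('a \<Rightarrow> bool) \<Rightarrow> real" where
  "rsp_prob G gs ps P =
     (\<Sum>S\<in>Pow {..<length gs}. if P (subprod G gs S) then sel_weight ps S else 0)"

definition mixes :: "('a, 'b) monoid_scheme \<Rightarrow> 'a list \<Rightarrow> real list \<Rightarrow> bool" where
  "mixes G gs ps \<longleftrightarrow> valid_rsp G gs ps \<and>
     (\<forall>x\<in>carrier G. rsp_prob G gs ps (\<lambda>g. g = x) = 1 / real (card (carrier G)))"

definition mixable :: "('a, 'b) monoid_scheme \<Rightarrow> bool" where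
  "mixable G \<longleftrightarrow> (\<exists>gs ps. mixes G gs ps)"

definition mixlen :: "('a, 'b) monoid_scheme \<Rightarrow> nat" where
  "mixlen G = (LEAST k. \<exists>gs ps. length gs = k \<and> mixes G gs ps)"

definition mixes_action :: "('a, 'b) monoid_scheme \<Rightarrow> ('a \<Rightarrow> 'c \<Rightarrow> 'c) \<Rightarrow> 'c set \<Rightarrow> 'c
    \<Rightarrow> 'a list \<Rightarrow> real list \<Rightarrow> bool" where
  "mixes_action G phi X x0 gs ps \<longleftrightarrow> valid_rsp G gs ps \<and>
     (\<forall>y\<in>X. rsp_prob G gs ps (\<lambda>g. phi g x0 = y) = 1 / real (card X))"

definition mixable_action :: "('a, 'b) monoid_scheme \<Rightarrow> ('a \<Rightarrow> 'c \<Rightarrow> 'c) \<Rightarrow> 'c set \<Rightarrow> bool" where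
  "mixable_action G phi X \<longleftrightarrow> (\<exists>x0\<in>X. \<exists>gs ps. mixes_action G phi X x0 gs ps)"

definition mixlen_action :: "('a, 'b) monoid_scheme \<Rightarrow> ('a \<Rightarrow> 'c \<Rightarrow> 'c) \<Rightarrow> 'c set \<Rightarrow> nat" where
  "mixlen_action G phi X =
     (LEAST k. \<exists>x0\<in>X. \<exists>gs ps. length gs = k \<and> mixes_action G phi X x0 gs ps)"

definition lcosets :: "('a, 'b) monoid_scheme \<Rightarrow> 'a set \<Rightarrow> 'a set set" where
  "lcosets G H = {g <#\<^bsub>G\<^esub> H | g. g \<in> carrier G}"

definition coset_action :: "('a, 'b) monoid_scheme \<Rightarrow> 'a \<Rightarrow> 'a set \<Rightarrow> 'a set" where
  "coset_action G g C = g <#\<^bsub>G\<^esub> C"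

end

theory Submission
  imports Defs
begin

text \<open>Let \<open>a\<close> be a random subproduct for which \<open>a c H\<close> is uniform on \<open>G/H\<close>, and \<open>h\<close> one
  that is uniform on \<open>H\<close>. Conjugating the factors of \<open>h\<close> by \<open>c\<close> and appending them to \<open>a\<close>
  gives the random subproduct \<open>a (c h c\<inverse>)\<close>, with \<open>a\<close> and \<open>h\<close> independent. For \<open>x \<in> G\<close> the
  event \<open>a c h c\<inverse> = x\<close> means \<open>h = (a c)\<inverse> x c\<close>; this requires \<open>a c H = x c H\<close>, which has
  probability \<open>1 / |G/H|\<close>, and then has conditional probability \<open>1 / |H|\<close>. So every point of \<open>G\<close>
  has the same probability, which must then be \<open>1 / |G|\<close>.\<close>

definition rsp_expect :: "('a, 'b) monoid_scheme \<Rightarrow> 'a list \<Rightarrow> real list \<Rightarrow> ('a \<Rightarrow> real) \<Rightarrow> real" where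
  "rsp_expect G gs ps f = (\<Sum>S\<in>Pow {..<length gs}. sel_weight ps S * f (subprod G gs S))"

lemma rsp_prob_eq_rsp_expect: "rsp_prob G gs ps P = rsp_expect G gs ps (\<lambda>g. if P g then 1 else 0)"
  unfolding rsp_prob_def rsp_expect_def by (intro sum.cong) auto

lemma rsp_expect_cong:
  assumes "\<And>S. f (subprod G gs S) = g (subprod G gs S)"
  shows "rsp_expect G gs ps f = rsp_expect G gs ps g"
  unfolding rsp_expect_def using assms by simp

lemma rsp_expect_cmult: "rsp_expect G gs ps (\<lambda>a. k * f a) = k * rsp_expect G gs ps f"
  unfolding rsp_expect_def by (simp add: sum_distrib_left mult.left_commute)

lemma sel_weight_eq_prod:
  assumes "S \<subseteq> {..<length ps}"
  shows "sel_weight ps S = (\<Prod>i\<in>S. ps ! i) * (\<Prod>i\<in>{..<length ps} - S. 1 - ps ! i)"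
proof -
  let ?F = "\<lambda>i. if i \<in> S then ps ! i else 1 - ps ! i"
  have "sel_weight ps S = prod ?F ({..<length ps} - S) * prod ?F S"
    unfolding sel_weight_def by (rule prod.subset_diff[OF assms finite_lessThan])
  also have "prod ?F S = (\<Prod>i\<in>S. ps ! i)"
    by (rule prod.cong) simp_all
  also have "prod ?F ({..<length ps} - S) = (\<Prod>i\<in>{..<length ps} - S. 1 - ps ! i)"
    by (rule prod.cong) simp_all
  finally show ?thesis
    by (simp only: mult.commute)
qed

lemma sum_sel_weight: "(\<Sum>S\<in>Pow {..<length ps}. sel_weight ps S) = 1"
proof -
  have "(\<Sum>S\<in>Pow {..<length ps}. sel_weight ps S)
      = (\<Sum>S\<in>Pow {..<length ps}. (\<Prod>i\<in>S. ps ! i) * (\<Prod>i\<in>{..<length ps} - S. 1 - ps ! i))"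
    by (intro sum.cong refl sel_weight_eq_prod) auto
  also have "\<dots> = (\<Prod>i<length ps. ps ! i + (1 - ps ! i))"
    using prod_add[of "{..<length ps}" "\<lambda>i. ps ! i" "\<lambda>i. 1 - ps ! i"] by simp
  finally show ?thesis by simp
qed

lemma bij_betw_Pow_lessThan_add:
  fixes n m :: nat
  shows "bij_betw (\<lambda>(A, B). A \<union> (\<lambda>j. j + n) ` B) (Pow {..<n} \<times> Pow {..<m}) (Pow {..<n + m})"
proof (rule bij_betw_byWitness[where f' = "\<lambda>S. (S \<inter> {..<n}, {j. j + n \<in> S})"])
  have "(A \<union> (\<lambda>j. j + n) ` B) \<inter> {..<n} = A \<and> {j. j + n \<in> A \<union> (\<lambda>j. j + n) ` B} = B"
    if "A \<subseteq> {..<n}" for A B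
    using that by auto
  then show "\<forall>AB\<in>Pow {..<n} \<times> Pow {..<m}. (\<lambda>S. (S \<inter> {..<n}, {j. j + n \<in> S}))
      ((\<lambda>(A, B). A \<union> (\<lambda>j. j + n) ` B) AB) = AB"
    by auto
  have "x \<in> (\<lambda>j. j + n) ` {j. j + n \<in> S}" if "x \<in> S" "\<not> x < n" for x S
    using that by (intro image_eqI[of _ _ "x - n"]) auto
  then show "\<forall>S\<in>Pow {..<n + m}. (\<lambda>(A, B). A \<union> (\<lambda>j. j + n) ` B)
      ((\<lambda>S. (S \<inter> {..<n}, {j. j + n \<in> S})) S) = S"
    by auto
qed auto

lemma sel_weight_append:
  assumes "length ps1 = n" "A \<subseteq> {..<n}"
  shows "sel_weight (ps1 @ ps2) (A \<union> (\<lambda>j. j + n) ` B) = sel_weight ps1 A * sel_weight ps2 B"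
proof -
  let ?m = "length ps2"
  let ?S = "A \<union> (\<lambda>j. j + n) ` B"
  define F where "F = (\<lambda>i. if i \<in> ?S then (ps1 @ ps2) ! i else 1 - (ps1 @ ps2) ! i)"
  have "sel_weight (ps1 @ ps2) ?S = prod F {..<n + ?m}"
    unfolding sel_weight_def F_def using assms(1) by simp
  also have "\<dots> = prod F {..<n} * prod F {n..<n + ?m}"
    by (simp add: prod.atLeastLessThan_concat[of 0 n "n + ?m", symmetric] lessThan_atLeast0)
  also have "prod F {..<n} = sel_weight ps1 A"
    unfolding sel_weight_def F_def using assms by (intro prod.cong) (auto simp: nth_append)
  also have "prod F {n..<n + ?m} = (\<Prod>i<?m. F (i + n))"
    using prod.shift_bounds_nat_ivl[of F 0 n ?m] by (simp add: lessThan_atLeast0 add.commute)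
  also have "\<dots> = sel_weight ps2 B"
    unfolding sel_weight_def F_def using assms by (intro prod.cong) (auto simp: nth_append)
  finally show ?thesis .
qed

lemma (in monoid) foldr_mult_closed:
  assumes "\<And>i. i \<in> set xs \<Longrightarrow> F i \<in> carrier G" "a \<in> carrier G"
  shows "foldr (\<lambda>i b. F i \<otimes> b) xs a \<in> carrier G"
  using assms by (induction xs) auto

lemma (in monoid) foldr_mult_eq_mult_foldr_one:
  assumes "\<And>i. i \<in> set xs \<Longrightarrow> F i \<in> carrier G" "a \<in> carrier G"
  shows "foldr (\<lambda>i b. F i \<otimes> b) xs a = foldr (\<lambda>i b. F i \<otimes> b) xs \<one> \<otimes> a"
  using assms by (induction xs) (auto simp: m_assoc foldr_mult_closed)

lemma (in monoid) subprod_closed: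
  assumes "set gs \<subseteq> carrier G"
  shows "subprod G gs S \<in> carrier G"
  unfolding subprod_def using assms by (intro foldr_mult_closed) auto

lemma (in monoid) subprod_append:
  assumes "set gs1 \<subseteq> carrier G" "set gs2 \<subseteq> carrier G" "A \<subseteq> {..<length gs1}"
  shows "subprod G (gs1 @ gs2) (A \<union> (\<lambda>j. j + length gs1) ` B)
       = subprod G gs1 A \<otimes> subprod G gs2 B"
proof -
  let ?n = "length gs1" and ?m = "length gs2"
  define F where "F = (\<lambda>i. if i \<in> A \<union> (\<lambda>j. j + ?n) ` B then (gs1 @ gs2) ! i else \<one>)"
  let ?prod = "\<lambda>xs. foldr (\<lambda>i b. F i \<otimes> b) xs \<one>"
  have F_closed: "F i \<in> carrier G" if "i < ?n + ?m" for i
    using that assms unfolding F_def by (auto simp: nth_append)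
  have "[0..<length (gs1 @ gs2)] = [0..<?n] @ [?n..<?n + ?m]"
    unfolding length_append by (rule upt_add_eq_append) simp
  then have "subprod G (gs1 @ gs2) (A \<union> (\<lambda>j. j + ?n) ` B)
      = foldr (\<lambda>i b. F i \<otimes> b) [0..<?n] (?prod [?n..<?n + ?m])"
    unfolding subprod_def F_def by simp
  also have "\<dots> = ?prod [0..<?n] \<otimes> ?prod [?n..<?n + ?m]"
    by (rule foldr_mult_eq_mult_foldr_one) (auto intro!: F_closed foldr_mult_closed)
  also have "?prod [0..<?n] = subprod G gs1 A"
    unfolding subprod_def F_def using assms(3)
    by (intro foldr_cong) (auto simp: nth_append)
  also have "?prod [?n..<?n + ?m] = ?prod (map (\<lambda>j. j + ?n) [0..<?m])"
    by (simp add: map_add_upt add.commute)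
  also have "\<dots> = subprod G gs2 B"
    unfolding subprod_def F_def foldr_map using assms(3)
    by (intro foldr_cong) (auto simp: nth_append)
  finally show ?thesis .
qed

lemma (in monoid) rsp_expect_append:
  assumes "set gs1 \<subseteq> carrier G" "set gs2 \<subseteq> carrier G" "length ps1 = length gs1"
  shows "rsp_expect G (gs1 @ gs2) (ps1 @ ps2) f
       = rsp_expect G gs1 ps1 (\<lambda>a. rsp_expect G gs2 ps2 (\<lambda>b. f (a \<otimes> b)))"
proof -
  let ?n = "length gs1" and ?m = "length gs2"
  let ?join = "\<lambda>(A, B). A \<union> (\<lambda>j. j + ?n) ` B"
  have "rsp_expect G (gs1 @ gs2) (ps1 @ ps2) f
      = (\<Sum>AB\<in>Pow {..<?n} \<times> Pow {..<?m}.
          sel_weight (ps1 @ ps2) (?join AB) * f (subprod G (gs1 @ gs2) (?join AB)))"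
    unfolding rsp_expect_def length_append
    by (rule sum.reindex_bij_betw[OF bij_betw_Pow_lessThan_add, symmetric])
  also have "\<dots> = (\<Sum>(A, B)\<in>Pow {..<?n} \<times> Pow {..<?m}.
      sel_weight ps1 A * (sel_weight ps2 B * f (subprod G gs1 A \<otimes> subprod G gs2 B)))"
    using assms by (intro sum.cong refl)
      (auto simp: sel_weight_append subprod_append mult.assoc)
  also have "\<dots> = rsp_expect G gs1 ps1 (\<lambda>a. rsp_expect G gs2 ps2 (\<lambda>b. f (a \<otimes> b)))"
    unfolding rsp_expect_def sum.cartesian_product[symmetric] by (simp add: sum_distrib_left)
  finally show ?thesis .
qed

lemma (in group) subprod_map_conj:
  assumes "set gs \<subseteq> carrier G" "c \<in> carrier G"
  shows "subprod G (map (\<lambda>h. c \<otimes> h \<otimes> inv c) gs) S = c \<otimes> subprod G gs S \<otimes> inv c"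
proof -
  let ?F = "\<lambda>i. if i \<in> S then gs ! i else \<one>"
  have gs_closed: "gs ! i \<in> carrier G" if "i < length gs" for i
    using assms(1) that by (auto dest: nth_mem)
  have "foldr (\<lambda>i b. (if i \<in> S then map (\<lambda>h. c \<otimes> h \<otimes> inv c) gs ! i else \<one>) \<otimes> b) xs \<one>
      = c \<otimes> foldr (\<lambda>i b. ?F i \<otimes> b) xs \<one> \<otimes> inv c"
    if "set xs \<subseteq> {..<length gs}" for xs
    using that
  proof (induction xs)
    case Nil
    then show ?case using assms by simp
  next
    case (Cons i xs)
    have "foldr (\<lambda>i b. ?F i \<otimes> b) xs \<one> \<in> carrier G" "gs ! i \<in> carrier G"
      using Cons.prems by (auto intro!: foldr_mult_closed gs_closed)
    then show ?case
      using Cons assms(2) by (auto simp: m_assoc) (simp add: m_assoc[symmetric])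
  qed
  then show ?thesis
    unfolding subprod_def by (simp add: atLeast0LessThan)
qed

lemma subprod_carrier_update: "subprod (G\<lparr>carrier := H\<rparr>) gs S = subprod G gs S"
proof -
  have "\<one>\<^bsub>G\<lparr>carrier := H\<rparr>\<^esub> = \<one>\<^bsub>G\<^esub>" "mult (G\<lparr>carrier := H\<rparr>) = mult G"
    by simp_all
  then show ?thesis
    unfolding subprod_def by (simp only:)
qed

lemma rsp_prob_carrier_update: "rsp_prob (G\<lparr>carrier := H\<rparr>) gs ps P = rsp_prob G gs ps P"
  unfolding rsp_prob_def subprod_carrier_update ..

lemma (in group) subprod_in_subgroup:
  assumes "subgroup H G" "set gs \<subseteq> H"
  shows "subprod G gs S \<in> H"
proof -
  interpret H: group "G\<lparr>carrier := H\<rparr>"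
    using assms(1) by (rule subgroup.subgroup_is_group) (rule is_group)
  show ?thesis
    using H.subprod_closed[of gs S] assms(2) by (simp add: subprod_carrier_update)
qed

lemma (in monoid) sum_rsp_prob_points:
  assumes "valid_rsp G gs ps" "finite (carrier G)"
  shows "(\<Sum>x\<in>carrier G. rsp_prob G gs ps (\<lambda>g. g = x)) = 1"
proof -
  have "(\<Sum>x\<in>carrier G. rsp_prob G gs ps (\<lambda>g. g = x))
      = (\<Sum>S\<in>Pow {..<length gs}. \<Sum>x\<in>carrier G. if subprod G gs S = x then sel_weight ps S else 0)"
    unfolding rsp_prob_def by (rule sum.swap)
  also have "\<dots> = (\<Sum>S\<in>Pow {..<length ps}. sel_weight ps S)"
    using assms subprod_closed by (simp add: valid_rsp_def)
  also have "\<dots> = 1"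
    by (rule sum_sel_weight)
  finally show ?thesis .
qed

lemma (in monoid) rsp_prob_points_const_eq:
  assumes "valid_rsp G gs ps" "finite (carrier G)"
    and "\<And>x. x \<in> carrier G \<Longrightarrow> rsp_prob G gs ps (\<lambda>g. g = x) = q"
  shows "q = 1 / real (card (carrier G))"
proof -
  have "real (card (carrier G)) * q = 1"
    using sum_rsp_prob_points[OF assms(1,2)] assms(3) by simp
  then show ?thesis
    by (metis mult.commute mult_zero_left nonzero_eq_divide_eq zero_neq_one)
qed

lemma (in group) l_coset_eq_iff:
  assumes "subgroup H G" "u \<in> carrier G" "v \<in> carrier G"
  shows "u <# H = v <# H \<longleftrightarrow> inv u \<otimes> v \<in> H"
  using assms subgroup.l_coset_eq_rcong[OF assms(1) is_group]
    eq_equiv_class_iff[OF subgroup.equiv_rcong[OF assms(1) is_group]]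
  by (simp add: r_congruent_def)

lemma (in group) rsp_prob_left_mult_conj:
  assumes H: "subgroup H G" and mix: "mixes (G\<lparr>carrier := H\<rparr>) gs ps"
    and c: "c \<in> carrier G" and a: "a \<in> carrier G" and x: "x \<in> carrier G"
  shows "rsp_prob G (map (\<lambda>h. c \<otimes> h \<otimes> inv c) gs) ps (\<lambda>b. a \<otimes> b = x)
       = (if (a \<otimes> c) <# H = (x \<otimes> c) <# H then 1 / real (card H) else 0)"
proof -
  define y where "y = inv (a \<otimes> c) \<otimes> (x \<otimes> c)"
  have gs_H: "set gs \<subseteq> H"
    using mix by (simp add: mixes_def valid_rsp_def)
  then have gs_G: "set gs \<subseteq> carrier G"
    using subgroup.subset[OF H] by blast
  have solve: "a \<otimes> (c \<otimes> h \<otimes> inv c) = x \<longleftrightarrow> h = y" if h: "h \<in> carrier G" for h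
  proof -
    have "a \<otimes> (c \<otimes> h \<otimes> inv c) = (a \<otimes> c \<otimes> h) \<otimes> inv c"
      using a c h by (simp add: m_assoc)
    then have "a \<otimes> (c \<otimes> h \<otimes> inv c) = x \<longleftrightarrow> a \<otimes> c \<otimes> h = x \<otimes> c"
      using a c h x by (simp add: inv_solve_right')
    also have "\<dots> \<longleftrightarrow> h = y"
      unfolding y_def using a c h x by (auto simp: inv_solve_left)
    finally show ?thesis .
  qed
  have "rsp_prob G (map (\<lambda>h. c \<otimes> h \<otimes> inv c) gs) ps (\<lambda>b. a \<otimes> b = x)
      = rsp_prob G gs ps (\<lambda>h. h = y)"
    unfolding rsp_prob_def length_map subprod_map_conj[OF gs_G c]
    using solve subprod_closed[OF gs_G] by simp
  also have "\<dots> = (if y \<in> H then 1 / real (card H) else 0)"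
  proof (cases "y \<in> H")
    case True
    then show ?thesis
      using mix by (simp add: mixes_def rsp_prob_carrier_update)
  next
    case False
    then have "subprod G gs S \<noteq> y" for S
      using subprod_in_subgroup[OF H gs_H] by metis
    then show ?thesis
      using False by (simp add: rsp_prob_def)
  qed
  also have "y \<in> H \<longleftrightarrow> (a \<otimes> c) <# H = (x \<otimes> c) <# H"
    unfolding y_def using l_coset_eq_iff[OF H] a c x by simp
  finally show ?thesis .
qed

lemma (in group) mixes_append_conj:
  assumes fin: "finite (carrier G)" and H: "subgroup H G"
    and mixH: "mixes (G\<lparr>carrier := H\<rparr>) gsH psH" and c: "c \<in> carrier G"
    and mixA: "mixes_action G (coset_action G) (lcosets G H) (c <# H) gsA psA"
  shows "mixes G (gsA @ map (\<lambda>h. c \<otimes> h \<otimes> inv c) gsH) (psA @ psH)"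
proof -
  let ?gs = "gsA @ map (\<lambda>h. c \<otimes> h \<otimes> inv c) gsH" and ?ps = "psA @ psH"
  let ?q = "1 / real (card H) * (1 / real (card (lcosets G H)))"
  have gsA: "set gsA \<subseteq> carrier G" "length psA = length gsA"
    using mixA by (auto simp: mixes_action_def valid_rsp_def)
  have gsH: "set gsH \<subseteq> carrier G"
    using mixH subgroup.subset[OF H] by (auto simp: mixes_def valid_rsp_def)
  have valid: "valid_rsp G ?gs ?ps"
    using mixA mixH gsH c by (auto simp: mixes_action_def mixes_def valid_rsp_def)
  have "rsp_prob G ?gs ?ps (\<lambda>g. g = x) = ?q" if x: "x \<in> carrier G" for x
  proof -
    let ?target = "\<lambda>a. coset_action G a (c <# H) = (x \<otimes> c) <# H"
    have "coset_action G a (c <# H) = (a \<otimes> c) <# H" if "a \<in> carrier G" for a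
      unfolding coset_action_def using lcos_m_assoc subgroup.subset[OF H] c that by simp
    then have translate: "rsp_prob G (map (\<lambda>h. c \<otimes> h \<otimes> inv c) gsH) psH (\<lambda>b. a \<otimes> b = x)
        = 1 / real (card H) * (if ?target a then 1 else 0)"
      if "a \<in> carrier G" for a
      using rsp_prob_left_mult_conj[OF H mixH c that x] that by simp
    have "(x \<otimes> c) <# H \<in> lcosets G H"
      unfolding lcosets_def using x c by blast
    then have target_prob: "rsp_prob G gsA psA ?target = 1 / real (card (lcosets G H))"
      using mixA by (simp add: mixes_action_def)
    have "rsp_prob G ?gs ?ps (\<lambda>g. g = x)
        = rsp_expect G gsA psA (\<lambda>a. rsp_prob G (map (\<lambda>h. c \<otimes> h \<otimes> inv c) gsH) psH (\<lambda>b. a \<otimes> b = x))"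
      unfolding rsp_prob_eq_rsp_expect using gsA gsH c by (subst rsp_expect_append) auto
    also have "\<dots> = rsp_expect G gsA psA (\<lambda>a. 1 / real (card H) * (if ?target a then 1 else 0))"
      by (rule rsp_expect_cong) (rule translate[OF subprod_closed[OF gsA(1)]])
    also have "\<dots> = 1 / real (card H) * rsp_prob G gsA psA ?target"
      unfolding rsp_prob_eq_rsp_expect by (rule rsp_expect_cmult)
    finally show ?thesis
      unfolding target_prob .
  qed
  moreover from this have "?q = 1 / real (card (carrier G))"
    by (rule rsp_prob_points_const_eq[OF valid fin])
  ultimately show ?thesis
    using valid by (simp add: mixes_def)
qed

theorem mainTheorem10:
  fixes G :: "('a, 'b) monoid_scheme" and H :: "'a set"
  assumes "group G" and "finite (carrier G)" and "subgroup H G"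
    and "mixable (G\<lparr>carrier := H\<rparr>)"
    and "mixable_action G (coset_action G) (lcosets G H)"
  shows "mixable G \<and>
    mixlen G \<le> mixlen (G\<lparr>carrier := H\<rparr>) + mixlen_action G (coset_action G) (lcosets G H)"
proof -
  interpret group G by fact
  let ?GH = "G\<lparr>carrier := H\<rparr>" and ?X = "lcosets G H"
  obtain gsH psH where lenH: "length gsH = mixlen ?GH" and mixH: "mixes ?GH gsH psH"
    using LeastI_ex[of "\<lambda>k. \<exists>gs ps. length gs = k \<and> mixes ?GH gs ps"] assms(4)
    unfolding mixable_def mixlen_def by blast
  obtain x0 gsA psA where "x0 \<in> ?X" and lenA: "length gsA = mixlen_action G (coset_action G) ?X"
    and mixA: "mixes_action G (coset_action G) ?X x0 gsA psA"
    using LeastI_ex[of "\<lambda>k. \<exists>x0\<in>?X. \<exists>gs ps. length gs = k \<and> mixes_action G (coset_action G) ?X x0 gs ps"]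
      assms(5)
    unfolding mixable_action_def mixlen_action_def by blast
  then obtain c where "c \<in> carrier G" and "x0 = c <#\<^bsub>G\<^esub> H"
    unfolding lcosets_def by blast
  with mixA have mixG: "mixes G (gsA @ map (\<lambda>h. c \<otimes>\<^bsub>G\<^esub> h \<otimes>\<^bsub>G\<^esub> inv\<^bsub>G\<^esub> c) gsH) (psA @ psH)"
    using mixes_append_conj assms(2,3) mixH by blast
  then have "mixlen G \<le> length (gsA @ map (\<lambda>h. c \<otimes>\<^bsub>G\<^esub> h \<otimes>\<^bsub>G\<^esub> inv\<^bsub>G\<^esub> c) gsH)"
    unfolding mixlen_def by (intro Least_le) blast
  with mixG lenH lenA show ?thesis
    unfolding mixable_def by auto
qed

end
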